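(* Let $X$ be a Cantor set with a compatible metric $d$, and let $\sigma$ be an aperiodic homeomorphism of $X$. Then $\sigma$ is chain transitive if and only if $\sigma$ is moving.
   Context: $\sigma$ is aperiodic if every $\sigma$-orbit is infinite. Given $\varepsilon>0$ and $x,y\in X$, an $\varepsilon$-chain from $x$ to $y$ is a finite sequence $x_0,x_1,\dots,x_n$ with $x_0=x$, $x_n=y$ and $d(\sigma(x_i),x_{i+1})<\varepsilon$ for $i=0,\dots,n-1$. $\sigma$ is chain transitive if for all $x,y\in X$ and every $\varepsilon>0$ there is an $\varepsilon$-chain from $x$ to $y$. $\sigma$ is moving if for every clopen set $E$ with $E\ne\emptyset$ and $E\ne X$, both $\sigma(E)\setminus E\ne\emptyset$ and $E\setminus\sigma(E)\ne\emptyset$. *)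

theory Defs
  imports "HOL-Analysis.Analysis"
begin

text \<open>The compatible metric is the metric of the ambient metric space type, restricted to X.\<close>
definition cantor_set :: "'a::metric_space set \<Rightarrow> bool" where
  "cantor_set X \<longleftrightarrow> X \<noteq> {} \<and> compact X
     \<and> (\<forall>x\<in>X. connected_component_set X x = {x})
     \<and> (\<forall>x\<in>X. x islimpt X)"

definition orbit :: "('a \<Rightarrow> 'a) \<Rightarrow> 'a \<Rightarrow> 'a set" where
  "orbit \<sigma> x = {(\<sigma> ^^ n) x | n. True}"

definition aperiodic :: "'a set \<Rightarrow> ('a \<Rightarrow> 'a) \<Rightarrow> bool" where
  "aperiodic X \<sigma> \<longleftrightarrow> (\<forall>x\<in>X. infinite (orbit \<sigma> x))"

definition eps_chain :: "'a::metric_space set \<Rightarrow> ('a \<Rightarrow> 'a) \<Rightarrow> real \<Rightarrow> 'a \<Rightarrow> 'a \<Rightarrow> bool" where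
  "eps_chain X \<sigma> \<epsilon> x y \<longleftrightarrow>
     (\<exists>n::nat. \<exists>c::nat \<Rightarrow> 'a. (\<forall>i\<le>n. c i \<in> X) \<and> c 0 = x \<and> c n = y
        \<and> (\<forall>i<n. dist (\<sigma> (c i)) (c (Suc i)) < \<epsilon>))"

definition chain_transitive :: "'a::metric_space set \<Rightarrow> ('a \<Rightarrow> 'a) \<Rightarrow> bool" where
  "chain_transitive X \<sigma> \<longleftrightarrow> (\<forall>x\<in>X. \<forall>y\<in>X. \<forall>\<epsilon>>0. eps_chain X \<sigma> \<epsilon> x y)"

definition clopen_in :: "'a::topological_space set \<Rightarrow> 'a set \<Rightarrow> bool" where
  "clopen_in X E \<longleftrightarrow> openin (top_of_set X) E \<and> closedin (top_of_set X) E"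

definition moving :: "'a::topological_space set \<Rightarrow> ('a \<Rightarrow> 'a) \<Rightarrow> bool" where
  "moving X \<sigma> \<longleftrightarrow> (\<forall>E. clopen_in X E \<and> E \<noteq> {} \<and> E \<noteq> X \<longrightarrow>
       \<sigma> ` E - E \<noteq> {} \<and> E - \<sigma> ` E \<noteq> {})"

end

theory Submission
  imports Defs
begin

text \<open>A clopen set \<open>E\<close> with \<open>\<sigma> ` E \<subseteq> E\<close> traps \<open>\<epsilon>\<close>-chains once \<open>\<epsilon>\<close> is below the
  (positive) distance between the compact sets \<open>E\<close> and \<open>X - E\<close>. Hence chain transitivity excludes
  proper nonempty invariant clopen sets; since \<open>\<sigma>\<close> is a bijection of \<open>X\<close>, \<open>E \<subseteq> \<sigma> ` E\<close> makes
  \<open>X - E\<close> invariant, so \<open>\<sigma>\<close> is moving.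

  Conversely, the set \<open>R\<close> of points reachable from \<open>x\<close> by \<open>\<epsilon>\<close>-chains of positive length is
  open, and by continuity \<open>\<sigma>\<close> maps \<open>x\<close> and the closure of \<open>R\<close> into \<open>R\<close>. As \<open>X\<close> is compact
  and totally disconnected, the compact set \<open>\<sigma> ` insert x (closure R)\<close> lies in a clopen
  \<open>U \<subseteq> R\<close>. Then \<open>\<sigma> ` U \<subseteq> U\<close>, so \<open>U = X\<close> if \<open>\<sigma>\<close> is moving, and every point is reachable.\<close>

lemma eps_chain_refl:
  assumes "x \<in> X"
  shows "eps_chain X \<sigma> \<epsilon> x x"
  unfolding eps_chain_def using assms by (intro exI[of _ 0]) auto

lemma eps_chain_imp_mem: "eps_chain X \<sigma> \<epsilon> x y \<Longrightarrow> y \<in> X"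
  unfolding eps_chain_def by auto

lemma eps_chain_snoc:
  assumes "eps_chain X \<sigma> \<epsilon> x y" and "z \<in> X" and "dist (\<sigma> y) z < \<epsilon>"
  shows "eps_chain X \<sigma> \<epsilon> x z"
proof -
  obtain n c where c: "\<forall>i\<le>n. c i \<in> X" "c 0 = x" "c n = y"
      "\<forall>i<n. dist (\<sigma> (c i)) (c (Suc i)) < \<epsilon>"
    using assms(1) unfolding eps_chain_def by blast
  show ?thesis
    unfolding eps_chain_def
    by (rule exI[of _ "Suc n"], rule exI[of _ "c(Suc n := z)"])
      (use c assms(2,3) in \<open>auto simp: le_Suc_eq less_Suc_eq\<close>)
qed

inductive_set chain_reachable :: "'a::metric_space set \<Rightarrow> ('a \<Rightarrow> 'a) \<Rightarrow> real \<Rightarrow> 'a \<Rightarrow> 'a set"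
  for X \<sigma> \<epsilon> x where
  start: "z \<in> X \<Longrightarrow> dist (\<sigma> x) z < \<epsilon> \<Longrightarrow> z \<in> chain_reachable X \<sigma> \<epsilon> x"
| step: "a \<in> chain_reachable X \<sigma> \<epsilon> x \<Longrightarrow> z \<in> X \<Longrightarrow> dist (\<sigma> a) z < \<epsilon>
    \<Longrightarrow> z \<in> chain_reachable X \<sigma> \<epsilon> x"

lemma chain_reachable_iff:
  "z \<in> chain_reachable X \<sigma> \<epsilon> x \<longleftrightarrow>
     z \<in> X \<and> (\<exists>a\<in>insert x (chain_reachable X \<sigma> \<epsilon> x). dist (\<sigma> a) z < \<epsilon>)"
  by (auto elim: chain_reachable.cases intro: chain_reachable.intros)

lemma chain_reachable_subset: "chain_reachable X \<sigma> \<epsilon> x \<subseteq> X"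
  using chain_reachable_iff by blast

lemma eps_chain_if_chain_reachable:
  assumes "x \<in> X" and "z \<in> chain_reachable X \<sigma> \<epsilon> x"
  shows "eps_chain X \<sigma> \<epsilon> x z"
  using assms(2)
proof induction
  case (start z)
  then show ?case using eps_chain_snoc[OF eps_chain_refl[OF assms(1)]] by blast
next
  case (step a z)
  then show ?case using eps_chain_snoc by blast
qed

lemma openin_chain_reachable: "openin (top_of_set X) (chain_reachable X \<sigma> \<epsilon> x)"
  unfolding openin_euclidean_subtopology_iff
proof (intro conjI chain_reachable_subset ballI)
  fix z assume "z \<in> chain_reachable X \<sigma> \<epsilon> x"
  then obtain a where a: "a \<in> insert x (chain_reachable X \<sigma> \<epsilon> x)" "dist (\<sigma> a) z < \<epsilon>"
    using chain_reachable_iff by blast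
  show "\<exists>e>0. \<forall>z'\<in>X. dist z' z < e \<longrightarrow> z' \<in> chain_reachable X \<sigma> \<epsilon> x"
  proof (intro exI[of _ "\<epsilon> - dist (\<sigma> a) z"] conjI ballI impI)
    show "\<epsilon> - dist (\<sigma> a) z > 0" using a by simp
    fix z' assume "z' \<in> X" "dist z' z < \<epsilon> - dist (\<sigma> a) z"
    moreover have "dist (\<sigma> a) z' \<le> dist (\<sigma> a) z + dist z' z"
      by (metis dist_commute dist_triangle)
    ultimately have "dist (\<sigma> a) z' < \<epsilon>" by linarith
    then show "z' \<in> chain_reachable X \<sigma> \<epsilon> x"
      using a \<open>z' \<in> X\<close> by (auto intro: chain_reachable.intros)
  qed
qed

lemma image_closure_chain_reachable:
  assumes "closed X" "continuous_on X \<sigma>" "\<sigma> ` X \<subseteq> X" "x \<in> X" "\<epsilon> > 0"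
  shows "\<sigma> ` insert x (closure (chain_reachable X \<sigma> \<epsilon> x)) \<subseteq> chain_reachable X \<sigma> \<epsilon> x"
    (is "_ \<subseteq> ?R")
proof -
  have "\<sigma> x \<in> ?R" using assms(3-5) by (intro chain_reachable.start) auto
  moreover have "\<sigma> z \<in> ?R" if z: "z \<in> closure ?R" for z
  proof -
    have zX: "z \<in> X"
      using z closure_minimal[OF chain_reachable_subset assms(1)] by blast
    obtain d where d: "d > 0" "\<forall>z'\<in>X. dist z' z < d \<longrightarrow> dist (\<sigma> z') (\<sigma> z) < \<epsilon>"
      using assms(2,5) zX unfolding continuous_on_iff by blast
    obtain a where a: "a \<in> ?R" "dist a z < d"
      using z d(1) unfolding closure_approachable by blast
    then have "dist (\<sigma> a) (\<sigma> z) < \<epsilon>"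
      using d chain_reachable_subset by blast
    then show ?thesis
      using a(1) zX assms(3) by (auto intro: chain_reachable.step)
  qed
  ultimately show ?thesis by blast
qed

lemma clopen_in_imp_subset: "clopen_in X E \<Longrightarrow> E \<subseteq> X"
  unfolding clopen_in_def by (auto dest: openin_imp_subset)

lemma clopen_in_Diff: "clopen_in X E \<Longrightarrow> clopen_in X (X - E)"
  unfolding clopen_in_def
  using closedin_diff[OF closedin_topspace, of "top_of_set X" E]
    openin_diff[OF openin_topspace, of "top_of_set X" E] by simp

lemma clopen_in_between_compact_open:
  fixes X :: "'a::metric_space set"
  assumes "compact X" and "\<forall>x\<in>X. connected_component_set X x = {x}"
    and "compact S" "S \<subseteq> A" "openin (top_of_set X) A"
  shows "\<exists>U. clopen_in X U \<and> S \<subseteq> U \<and> U \<subseteq> A"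
proof -
  have AX: "A \<subseteq> X" using assms(5) by (rule openin_imp_subset)
  have "separated_between (top_of_set X) S (X - A)"
  proof (rule cut_wire_fence_theorem)
    show "compact_space (top_of_set X)" using assms(1) by (simp add: compact_space_subtopology)
    show "Hausdorff_space (top_of_set X)" by (simp add: Hausdorff_space_subtopology)
    show "closedin (top_of_set X) S"
      using assms(3,4) AX by (meson closed_subset compact_imp_closed order_trans)
    show "closedin (top_of_set X) (X - A)"
      using closedin_diff[OF closedin_topspace assms(5)] by simp
    fix C assume "connectedin (top_of_set X) C"
    then have CX: "C \<subseteq> X" and "connected C" by (auto simp: connectedin_subtopology)
    then have "C \<subseteq> {p}" if "p \<in> C" for p
      using connected_component_maximal[OF that] assms(2) that by blast
    then have "C = {} \<or> (\<exists>p. C = {p})" by blast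
    then show "disjnt C S \<or> disjnt C (X - A)"
      using assms(4) by (auto simp: disjnt_def)
  qed
  then obtain U where "closedin (top_of_set X) U" "openin (top_of_set X) U" "S \<subseteq> U"
      "X - A \<subseteq> X - U"
    unfolding separated_between by auto
  moreover have "U \<subseteq> X" using \<open>openin (top_of_set X) U\<close> by (rule openin_imp_subset)
  ultimately show ?thesis unfolding clopen_in_def by blast
qed

lemma eps_chain_stays_in_invariant_clopen:
  assumes "compact X" "clopen_in X E" "\<sigma> ` E \<subseteq> E" "x \<in> E"
  obtains \<epsilon> where "\<epsilon> > 0" "\<And>y. eps_chain X \<sigma> \<epsilon> x y \<Longrightarrow> y \<in> E"
proof (cases "X - E = {}")
  case True
  show ?thesis
  proof (rule that)
    show "(1::real) > 0" by simp
    show "y \<in> E" if "eps_chain X \<sigma> 1 x y" for y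
      using eps_chain_imp_mem[OF that] True by blast
  qed
next
  case False
  have cX: "closed X" using assms(1) by (rule compact_imp_closed)
  have "closedin (top_of_set X) E" "closedin (top_of_set X) (X - E)"
    using assms(2) clopen_in_Diff[OF assms(2)] unfolding clopen_in_def by blast+
  then have "closed E" and cXE: "closed (X - E)"
    using closedin_closed_trans[OF _ cX] by blast+
  then have cE: "compact E"
    using compact_Int_closed[OF assms(1), of E] clopen_in_imp_subset[OF assms(2)]
    by (simp add: Int_absorb1)
  define \<epsilon> where "\<epsilon> = setdist E (X - E)"
  have "\<epsilon> > 0"
    unfolding \<epsilon>_def using setdist_gt_0_compact_closed[OF cE cXE] False assms(4) by blast
  moreover have "y \<in> E" if chain: "eps_chain X \<sigma> \<epsilon> x y" for y
  proof -
    obtain n c where c: "\<forall>i\<le>n. c i \<in> X" "c 0 = x" "c n = y"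
        "\<forall>i<n. dist (\<sigma> (c i)) (c (Suc i)) < \<epsilon>"
      using chain unfolding eps_chain_def by blast
    have "c i \<in> E" if "i \<le> n" for i
      using that
    proof (induction i)
      case (Suc i)
      then have "\<sigma> (c i) \<in> E" "dist (\<sigma> (c i)) (c (Suc i)) < \<epsilon>" "c (Suc i) \<in> X"
        using assms(3) c by auto
      moreover have "c (Suc i) \<notin> X - E"
        using setdist_le_dist[of "\<sigma> (c i)" E "c (Suc i)" "X - E"] calculation
        unfolding \<epsilon>_def by linarith
      ultimately show ?case by blast
    qed (use c assms(4) in simp)
    then show ?thesis using c(3) by blast
  qed
  ultimately show ?thesis using that by blast
qed

lemma chain_transitive_no_invariant_clopen:
  assumes "compact X" "chain_transitive X \<sigma>" "clopen_in X E" "E \<noteq> {}" "E \<noteq> X"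
  shows "\<not> \<sigma> ` E \<subseteq> E"
proof
  assume "\<sigma> ` E \<subseteq> E"
  obtain x where x: "x \<in> E" using assms(4) by blast
  obtain \<epsilon> where "\<epsilon> > 0" and stays: "\<And>y. eps_chain X \<sigma> \<epsilon> x y \<Longrightarrow> y \<in> E"
    using eps_chain_stays_in_invariant_clopen[OF assms(1,3) \<open>\<sigma> ` E \<subseteq> E\<close> x] by blast
  have "E \<subseteq> X" using assms(3) by (rule clopen_in_imp_subset)
  then obtain y where "y \<in> X - E" using assms(5) by blast
  then show False
    using stays assms(2) x \<open>E \<subseteq> X\<close> \<open>\<epsilon> > 0\<close> unfolding chain_transitive_def by blast
qed

lemma chain_transitive_imp_moving:
  assumes "compact X" "\<sigma> ` X = X" "inj_on \<sigma> X" "chain_transitive X \<sigma>"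
  shows "moving X \<sigma>"
  unfolding moving_def
proof (intro allI impI conjI)
  fix E assume E: "clopen_in X E \<and> E \<noteq> {} \<and> E \<noteq> X"
  then show "\<sigma> ` E - E \<noteq> {}"
    using chain_transitive_no_invariant_clopen[OF assms(1,4)] by blast
  have EX: "E \<subseteq> X" using E clopen_in_imp_subset by blast
  have "clopen_in X (X - E)" "X - E \<noteq> {}" "X - E \<noteq> X"
    using E EX clopen_in_Diff by auto
  then have "\<not> \<sigma> ` (X - E) \<subseteq> X - E"
    by (rule chain_transitive_no_invariant_clopen[OF assms(1,4)])
  moreover have "\<sigma> ` (X - E) = X - \<sigma> ` E"
    using inj_on_image_set_diff[OF assms(3) Diff_subset EX] assms(2) by simp
  ultimately show "E - \<sigma> ` E \<noteq> {}" by blast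
qed

lemma moving_imp_chain_transitive:
  assumes "compact X" "\<forall>x\<in>X. connected_component_set X x = {x}"
    and "continuous_on X \<sigma>" "\<sigma> ` X \<subseteq> X" "moving X \<sigma>"
  shows "chain_transitive X \<sigma>"
  unfolding chain_transitive_def
proof (intro ballI allI impI)
  fix x y and \<epsilon> :: real
  assume x: "x \<in> X" and y: "y \<in> X" and "\<epsilon> > 0"
  define R where "R = chain_reachable X \<sigma> \<epsilon> x"
  have cX: "closed X" using assms(1) by (rule compact_imp_closed)
  have "insert x (closure R) \<subseteq> X"
    using x closure_minimal[OF chain_reachable_subset cX] unfolding R_def by blast
  moreover have "compact (insert x (closure R))"
    using compact_Int_closed[OF assms(1), of "insert x (closure R)"] \<open>insert x (closure R) \<subseteq> X\<close>
    by (simp add: Int_absorb1)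
  ultimately have "compact (\<sigma> ` insert x (closure R))"
    using compact_continuous_image continuous_on_subset[OF assms(3)] by blast
  moreover have "\<sigma> ` insert x (closure R) \<subseteq> R"
    unfolding R_def using image_closure_chain_reachable[OF cX assms(3,4) x \<open>\<epsilon> > 0\<close>] .
  moreover have "openin (top_of_set X) R"
    unfolding R_def by (rule openin_chain_reachable)
  ultimately obtain U where U: "clopen_in X U" "\<sigma> ` insert x (closure R) \<subseteq> U" "U \<subseteq> R"
    using clopen_in_between_compact_open[OF assms(1,2)] by blast
  have "\<sigma> ` U \<subseteq> U" using U closure_subset[of R] by blast
  moreover have "U \<noteq> {}" using U(2) by blast
  ultimately have "U = X" using U(1) assms(5) unfolding moving_def by blast
  then show "eps_chain X \<sigma> \<epsilon> x y"
    using eps_chain_if_chain_reachable[OF x] U(3) y unfolding R_def by blast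
qed

theorem theorem10p3:
  fixes X :: "'a::metric_space set" and \<sigma> :: "'a \<Rightarrow> 'a"
  assumes "cantor_set X"
    and "\<exists>\<tau>. homeomorphism X X \<sigma> \<tau>"
    and "aperiodic X \<sigma>"
  shows "chain_transitive X \<sigma> \<longleftrightarrow> moving X \<sigma>"
proof -
  have "compact X" and totally_disconnected: "\<forall>x\<in>X. connected_component_set X x = {x}"
    using assms(1) unfolding cantor_set_def by auto
  obtain \<tau> where h: "homeomorphism X X \<sigma> \<tau>" using assms(2) by blast
  then have "\<sigma> ` X = X" "continuous_on X \<sigma>"
    unfolding homeomorphism_def by auto
  moreover have "inj_on \<sigma> X"
    using h homeomorphism_apply1 unfolding inj_on_def by metis
  ultimately show ?thesis
    using chain_transitive_imp_moving[OF \<open>compact X\<close>]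
      moving_imp_chain_transitive[OF \<open>compact X\<close> totally_disconnected] by blast
qed

end
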